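(* Let $\mathcal{L}_1=(L_1,\nu_1)$ and $\mathcal{L}_2=(L_2,\nu_2)$ be propositional languages with common fragment $\mathcal{L}=(L_1\cap L_2,\nu)$, where $\nu=\nu_1|_{L_1\cap L_2}=\nu_2|_{L_1\cap L_2}$, and let $i_1:\Sigma_{\mathcal{L}}\to\Sigma_{\mathcal{L}_1}$, $i_2:\Sigma_{\mathcal{L}}\to\Sigma_{\mathcal{L}_2}$ be the monoid embeddings sending $\sigma$ to the unique substitution agreeing with $\sigma$ on $\mathrm{Var}$. Then the amalgam $(\Sigma_{\mathcal{L}},i_1,\Sigma_{\mathcal{L}_1},i_2,\Sigma_{\mathcal{L}_2})$ is strongly embeddable in $\Sigma_{\mathcal{L}_1\cup\mathcal{L}_2}$, i.e., there exist injective monoid homomorphisms $j_1:\Sigma_{\mathcal{L}_1}\to\Sigma_{\mathcal{L}_1\cup\mathcal{L}_2}$ and $j_2:\Sigma_{\mathcal{L}_2}\to\Sigma_{\mathcal{L}_1\cup\mathcal{L}_2}$ with $j_1\circ i_1=j_2\circ i_2$ and $j_1[\Sigma_{\mathcal{L}_1}]\cap j_2[\Sigma_{\mathcal{L}_2}]=j_1i_1[\Sigma_{\mathcal{L}}]=j_2i_2[\Sigma_{\mathcal{L}}]$.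
   Context: A propositional language $(L,\nu)$ is a set $L$ of connectives with arity function $\nu:L\to\omega$. Fix a denumerable set $\mathrm{Var}$ of variables; $\mathit{Fm}_{\mathcal{L}}$ is the absolutely free $\mathcal{L}$-algebra over $\mathrm{Var}$ and $\Sigma_{\mathcal{L}}$ is the monoid, under composition, of endomorphisms of $\mathit{Fm}_{\mathcal{L}}$ (substitutions); each substitution is determined by its values on $\mathrm{Var}$. $\mathcal{L}_1\cup\mathcal{L}_2$ is the language $(L_1\cup L_2,\nu_1\cup\nu_2)$. *)

theory Defs
  imports "HOL-Algebra.Group"
begin

datatype 'c fm = Var nat | App 'c "'c fm list"

fun wf_fm :: "'c set \<Rightarrow> ('c \<Rightarrow> nat) \<Rightarrow> 'c fm \<Rightarrow> bool" where
  "wf_fm L nu (Var n) = True"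
| "wf_fm L nu (App c ts) = (c \<in> L \<and> length ts = nu c \<and> (\<forall>t\<in>set ts. wf_fm L nu t))"

definition Fm :: "'c set \<Rightarrow> ('c \<Rightarrow> nat) \<Rightarrow> 'c fm set" where
  "Fm L nu = {t. wf_fm L nu t}"

definition is_endo :: "'c set \<Rightarrow> ('c \<Rightarrow> nat) \<Rightarrow> ('c fm \<Rightarrow> 'c fm) \<Rightarrow> bool" where
  "is_endo L nu \<sigma> \<longleftrightarrow>
     \<sigma> \<in> extensional (Fm L nu) \<and> \<sigma> ` Fm L nu \<subseteq> Fm L nu \<and>
     (\<forall>c ts. c \<in> L \<and> length ts = nu c \<and> set ts \<subseteq> Fm L nu \<longrightarrow>
        \<sigma> (App c ts) = App c (map \<sigma> ts))"

definition Subst :: "'c set \<Rightarrow> ('c \<Rightarrow> nat) \<Rightarrow> ('c fm \<Rightarrow> 'c fm) monoid" where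
  "Subst L nu = \<lparr> carrier = {\<sigma>. is_endo L nu \<sigma>},
                  mult = (\<lambda>\<sigma> \<tau>. restrict (\<sigma> \<circ> \<tau>) (Fm L nu)),
                  one = restrict id (Fm L nu) \<rparr>"

definition emb :: "'c set \<Rightarrow> ('c \<Rightarrow> nat) \<Rightarrow> ('c fm \<Rightarrow> 'c fm) \<Rightarrow> ('c fm \<Rightarrow> 'c fm)" where
  "emb L' nu' \<sigma> = (THE \<tau>. \<tau> \<in> carrier (Subst L' nu') \<and> (\<forall>n. \<tau> (Var n) = \<sigma> (Var n)))"

definition mono_emb :: "('a, 'x) monoid_scheme \<Rightarrow> ('b, 'y) monoid_scheme \<Rightarrow> ('a \<Rightarrow> 'b) \<Rightarrow> bool" where
  "mono_emb M N j \<longleftrightarrow> j \<in> hom M N \<and> j \<one>\<^bsub>M\<^esub> = \<one>\<^bsub>N\<^esub> \<and> inj_on j (carrier M)"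

end

theory Submission
  imports Defs
begin

text \<open>A substitution of any language is determined by the assignment of formulas to variables,
  and composition of substitutions corresponds to substituting one assignment into the other.
  So each monoid \<open>\<Sigma>\<^sub>L\<close> is a copy of the assignments with values in \<open>Fm\<^sub>L\<close>, and the canonical
  embedding into a larger language keeps the assignment. Taking \<open>j\<^sub>1 = j\<^sub>2\<close> to be the canonical
  embedding into \<open>\<Sigma>\<^bsub>L\<^sub>1 \<union> L\<^sub>2\<^esub>\<close>, the images of \<open>\<Sigma>\<^bsub>L\<^sub>1\<^esub>\<close> and \<open>\<Sigma>\<^bsub>L\<^sub>2\<^esub>\<close> meet in the
  assignments with values in \<open>Fm\<^bsub>L\<^sub>1\<^esub> \<inter> Fm\<^bsub>L\<^sub>2\<^esub> = Fm\<^bsub>L\<^sub>1 \<inter> L\<^sub>2\<^esub>\<close>, i.e. in the image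
  of \<open>\<Sigma>\<^bsub>L\<^sub>1 \<inter> L\<^sub>2\<^esub>\<close>.\<close>

fun subst :: "(nat \<Rightarrow> 'c fm) \<Rightarrow> 'c fm \<Rightarrow> 'c fm" where
  "subst f (Var n) = f n"
| "subst f (App c ts) = App c (map (subst f) ts)"

lemma subst_subst: "subst f (subst g t) = subst (\<lambda>n. subst f (g n)) t"
  by (induction t) auto

lemma subst_Var: "subst Var t = t"
  by (induction t) (auto simp: map_idI)

definition endo_of :: "'c set \<Rightarrow> ('c \<Rightarrow> nat) \<Rightarrow> (nat \<Rightarrow> 'c fm) \<Rightarrow> 'c fm \<Rightarrow> 'c fm" where
  "endo_of L nu f = restrict (subst f) (Fm L nu)"

lemma endo_of_Var [simp]: "endo_of L nu f (Var n) = f n"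
  by (simp add: endo_of_def Fm_def)

lemma inj_endo_of: "inj (endo_of L nu)"
proof (rule injI)
  fix f g assume "endo_of L nu f = endo_of L nu g"
  then show "f = g"
    by (metis endo_of_Var ext)
qed

lemma Var_in_Fm [simp]: "Var n \<in> Fm L nu"
  by (simp add: Fm_def)

lemma wf_fm_mono:
  "L \<subseteq> L' \<Longrightarrow> \<forall>c\<in>L. nu' c = nu c \<Longrightarrow> wf_fm L nu t \<Longrightarrow> wf_fm L' nu' t"
  by (induction t) auto

lemma Fm_mono: "L \<subseteq> L' \<Longrightarrow> \<forall>c\<in>L. nu' c = nu c \<Longrightarrow> Fm L nu \<subseteq> Fm L' nu'"
  unfolding Fm_def using wf_fm_mono by blast

lemma Fm_Int:
  assumes "\<forall>c \<in> L1 \<inter> L2. nu1 c = nu2 c"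
  shows "Fm L1 nu1 \<inter> Fm L2 nu2 = Fm (L1 \<inter> L2) nu1"
proof
  have "wf_fm (L1 \<inter> L2) nu1 t" if "wf_fm L1 nu1 t" "wf_fm L2 nu2 t" for t
    using that by (induction t) auto
  then show "Fm L1 nu1 \<inter> Fm L2 nu2 \<subseteq> Fm (L1 \<inter> L2) nu1"
    by (auto simp: Fm_def)
  show "Fm (L1 \<inter> L2) nu1 \<subseteq> Fm L1 nu1 \<inter> Fm L2 nu2"
    using assms Fm_mono[of "L1 \<inter> L2" L1 nu1 nu1] Fm_mono[of "L1 \<inter> L2" L2 nu2 nu1] by auto
qed

lemma subst_in_Fm: "f \<in> UNIV \<rightarrow> Fm L nu \<Longrightarrow> t \<in> Fm L nu \<Longrightarrow> subst f t \<in> Fm L nu"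
  unfolding Fm_def by (induction t) auto

lemma endo_of_in_carrier:
  assumes f: "f \<in> UNIV \<rightarrow> Fm L nu"
  shows "endo_of L nu f \<in> carrier (Subst L nu)"
proof -
  have "endo_of L nu f (App c ts) = App c (map (endo_of L nu f) ts)"
    if "c \<in> L" "length ts = nu c" "set ts \<subseteq> Fm L nu" for c ts
  proof -
    have "App c ts \<in> Fm L nu"
      using that by (auto simp: Fm_def)
    moreover have "map (endo_of L nu f) ts = map (subst f) ts"
      using \<open>set ts \<subseteq> Fm L nu\<close> by (auto simp: endo_of_def)
    ultimately show ?thesis
      by (simp add: endo_of_def)
  qed
  moreover have "endo_of L nu f ` Fm L nu \<subseteq> Fm L nu"
    using f by (auto simp: endo_of_def subst_in_Fm)
  ultimately show ?thesis
    by (simp add: Subst_def is_endo_def endo_of_def)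
qed

lemma carrier_SubstD:
  assumes "\<sigma> \<in> carrier (Subst L nu)"
  shows "\<sigma> = endo_of L nu (\<lambda>n. \<sigma> (Var n))"
    and "(\<lambda>n. \<sigma> (Var n)) \<in> UNIV \<rightarrow> Fm L nu"
proof -
  have endo: "is_endo L nu \<sigma>"
    using assms by (simp add: Subst_def)
  have on_Fm: "\<sigma> t = subst (\<lambda>n. \<sigma> (Var n)) t" if "wf_fm L nu t" for t
    using that
  proof (induction t)
    case (App c ts)
    then have "c \<in> L" "length ts = nu c" "set ts \<subseteq> Fm L nu"
      by (auto simp: Fm_def)
    then have "\<sigma> (App c ts) = App c (map \<sigma> ts)"
      using endo unfolding is_endo_def by blast
    also have "map \<sigma> ts = map (subst (\<lambda>n. \<sigma> (Var n))) ts"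
    proof (rule map_cong[OF refl])
      fix t assume "t \<in> set ts"
      with App.prems show "\<sigma> t = subst (\<lambda>n. \<sigma> (Var n)) t"
        by (intro App.IH) auto
    qed
    finally show ?case
      by simp
  qed simp
  have "\<sigma> \<in> extensional (Fm L nu)"
    using endo by (simp add: is_endo_def)
  then show "\<sigma> = endo_of L nu (\<lambda>n. \<sigma> (Var n))"
    unfolding endo_of_def
  proof (rule extensionalityI[OF _ restrict_extensional])
    fix t assume "t \<in> Fm L nu"
    with on_Fm[of t] show "\<sigma> t = restrict (subst (\<lambda>n. \<sigma> (Var n))) (Fm L nu) t"
      by (simp add: Fm_def)
  qed
  show "(\<lambda>n. \<sigma> (Var n)) \<in> UNIV \<rightarrow> Fm L nu"
    using endo by (auto simp: is_endo_def)
qed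

lemma carrier_Subst: "carrier (Subst L nu) = endo_of L nu ` (UNIV \<rightarrow> Fm L nu)"
  using carrier_SubstD endo_of_in_carrier by blast

lemma one_Subst: "\<one>\<^bsub>Subst L nu\<^esub> = endo_of L nu Var"
  by (simp add: Subst_def endo_of_def subst_Var fun_eq_iff)

lemma mult_Subst_endo_of:
  assumes "g \<in> UNIV \<rightarrow> Fm L nu"
  shows "endo_of L nu f \<otimes>\<^bsub>Subst L nu\<^esub> endo_of L nu g = endo_of L nu (\<lambda>n. subst f (g n))"
  using assms by (auto simp: Subst_def endo_of_def subst_subst subst_in_Fm fun_eq_iff)

lemma emb_endo_of:
  assumes "f \<in> UNIV \<rightarrow> Fm L' nu'"
  shows "emb L' nu' (endo_of L nu f) = endo_of L' nu' f"
  unfolding emb_def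
proof (rule the_equality)
  show "endo_of L' nu' f \<in> carrier (Subst L' nu') \<and>
      (\<forall>n. endo_of L' nu' f (Var n) = endo_of L nu f (Var n))"
    using assms by (simp add: endo_of_in_carrier)
next
  fix \<tau> assume "\<tau> \<in> carrier (Subst L' nu') \<and> (\<forall>n. \<tau> (Var n) = endo_of L nu f (Var n))"
  then show "\<tau> = endo_of L' nu' f"
    using carrier_SubstD(1)[of \<tau>] by simp
qed

lemma emb_image:
  assumes "Fm L nu \<subseteq> Fm L' nu'"
  shows "emb L' nu' ` carrier (Subst L nu) = endo_of L' nu' ` (UNIV \<rightarrow> Fm L nu)"
  unfolding carrier_Subst image_image
  using assms by (intro image_cong) (auto intro!: emb_endo_of)

lemma emb_emb:
  assumes "Fm L nu \<subseteq> Fm L' nu'" "Fm L' nu' \<subseteq> Fm L'' nu''"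
    and "\<sigma> \<in> carrier (Subst L nu)"
  shows "emb L'' nu'' (emb L' nu' \<sigma>) = emb L'' nu'' \<sigma>"
proof -
  obtain f where f: "f \<in> UNIV \<rightarrow> Fm L nu" and "\<sigma> = endo_of L nu f"
    using assms(3) carrier_Subst by blast
  moreover have "f \<in> UNIV \<rightarrow> Fm L' nu'" "f \<in> UNIV \<rightarrow> Fm L'' nu''"
    using f assms(1,2) by auto
  ultimately show ?thesis
    by (simp add: emb_endo_of)
qed

lemma mono_emb_emb:
  assumes sub: "Fm L nu \<subseteq> Fm L' nu'"
  shows "mono_emb (Subst L nu) (Subst L' nu') (emb L' nu')"
proof -
  have emb: "emb L' nu' (endo_of L nu f) = endo_of L' nu' f" if "f \<in> UNIV \<rightarrow> Fm L nu" for f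
    using that sub by (auto intro!: emb_endo_of)
  have "emb L' nu' ` carrier (Subst L nu) \<subseteq> carrier (Subst L' nu')"
    unfolding emb_image[OF sub] using sub by (auto intro!: endo_of_in_carrier)
  moreover have "emb L' nu' (\<sigma> \<otimes>\<^bsub>Subst L nu\<^esub> \<tau>) = emb L' nu' \<sigma> \<otimes>\<^bsub>Subst L' nu'\<^esub> emb L' nu' \<tau>"
    if carrier: "\<sigma> \<in> carrier (Subst L nu)" "\<tau> \<in> carrier (Subst L nu)" for \<sigma> \<tau>
  proof -
    obtain f g where f: "f \<in> UNIV \<rightarrow> Fm L nu" "\<sigma> = endo_of L nu f"
      and g: "g \<in> UNIV \<rightarrow> Fm L nu" "\<tau> = endo_of L nu g"
      using carrier unfolding carrier_Subst by blast
    have "(\<lambda>n. subst f (g n)) \<in> UNIV \<rightarrow> Fm L nu"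
      using f(1) g(1) by (blast intro: subst_in_Fm)
    moreover have "g \<in> UNIV \<rightarrow> Fm L' nu'"
      using g sub by auto
    ultimately show ?thesis
      using f g by (simp add: emb mult_Subst_endo_of)
  qed
  moreover have "inj_on (emb L' nu') (carrier (Subst L nu))"
  proof (rule inj_onI)
    fix \<sigma> \<tau> assume "\<sigma> \<in> carrier (Subst L nu)" "\<tau> \<in> carrier (Subst L nu)"
      and "emb L' nu' \<sigma> = emb L' nu' \<tau>"
    then show "\<sigma> = \<tau>"
      unfolding carrier_Subst by (auto simp: emb dest: injD[OF inj_endo_of])
  qed
  moreover have "emb L' nu' \<one>\<^bsub>Subst L nu\<^esub> = \<one>\<^bsub>Subst L' nu'\<^esub>"
    by (simp add: one_Subst emb)
  ultimately show ?thesis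
    unfolding mono_emb_def hom_def by blast
qed

theorem proposition4p2:
  fixes L1 L2 :: "'c set" and nu1 nu2 :: "'c \<Rightarrow> nat"
  assumes agree: "\<forall>c \<in> L1 \<inter> L2. nu1 c = nu2 c"
  defines "S \<equiv> Subst (L1 \<inter> L2) nu1"
      and "S1 \<equiv> Subst L1 nu1"
      and "S2 \<equiv> Subst L2 nu2"
      and "S12 \<equiv> Subst (L1 \<union> L2) (\<lambda>c. if c \<in> L1 then nu1 c else nu2 c)"
      and "i1 \<equiv> emb L1 nu1"
      and "i2 \<equiv> emb L2 nu2"
  shows "\<exists>j1 j2. mono_emb S1 S12 j1 \<and> mono_emb S2 S12 j2 \<and>
           (\<forall>\<sigma> \<in> carrier S. j1 (i1 \<sigma>) = j2 (i2 \<sigma>)) \<and>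
           j1 ` carrier S1 \<inter> j2 ` carrier S2 = (j1 \<circ> i1) ` carrier S \<and>
           (j1 \<circ> i1) ` carrier S = (j2 \<circ> i2) ` carrier S"
proof -
  define nu12 where "nu12 = (\<lambda>c. if c \<in> L1 then nu1 c else nu2 c)"
  define j where "j = emb (L1 \<union> L2) nu12"
  have F1: "Fm L1 nu1 \<subseteq> Fm (L1 \<union> L2) nu12"
    and F2: "Fm L2 nu2 \<subseteq> Fm (L1 \<union> L2) nu12"
    and F01: "Fm (L1 \<inter> L2) nu1 \<subseteq> Fm L1 nu1"
    and F02: "Fm (L1 \<inter> L2) nu1 \<subseteq> Fm L2 nu2"
    by (rule Fm_mono; use agree in \<open>auto simp: nu12_def\<close>)+
  have j_i1: "j (i1 \<sigma>) = j \<sigma>" and j_i2: "j (i2 \<sigma>) = j \<sigma>" if "\<sigma> \<in> carrier S" for \<sigma>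
    using that emb_emb[OF F01 F1] emb_emb[OF F02 F2] by (simp_all add: S_def i1_def i2_def j_def)
  have "j ` carrier S1 \<inter> j ` carrier S2 =
      endo_of (L1 \<union> L2) nu12 ` ((UNIV \<rightarrow> Fm L1 nu1) \<inter> (UNIV \<rightarrow> Fm L2 nu2))"
    unfolding S1_def S2_def j_def emb_image[OF F1] emb_image[OF F2]
    by (rule image_Int[OF inj_endo_of, symmetric])
  also have "\<dots> = j ` carrier S"
    unfolding S_def j_def emb_image[OF order_trans[OF F01 F1]] Fm_Int[OF agree, symmetric]
    by (auto simp: Pi_def)
  finally have "j ` carrier S1 \<inter> j ` carrier S2 = j ` carrier S" .
  moreover have "(j \<circ> i1) ` carrier S = j ` carrier S" "(j \<circ> i2) ` carrier S = j ` carrier S"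
    using j_i1 j_i2 by (auto intro!: image_cong)
  moreover have "mono_emb S1 S12 j" "mono_emb S2 S12 j"
    using mono_emb_emb[OF F1] mono_emb_emb[OF F2] by (simp_all add: S1_def S2_def S12_def j_def nu12_def)
  ultimately show ?thesis
    using j_i1 j_i2 by metis
qed

end
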